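(* Let $\mathbb A=(A_n)_{n\in\mathbb Z^+}$ be a sequence of invertible linear operators on $\mathbb R^d$ and $\mathcal S=\{\|\cdot\|_n;\ n\in\mathbb Z^+\}$ a sequence of norms such that there exist $K,a>0$ with $\|\mathcal A(m,n)x\|_m\le Ke^{a(m-n)}\|x\|_n$ and $\|\mathcal A(n,m)x\|_n\le Ke^{a(m-n)}\|x\|_m$ for all $m\ge n$, $x$. Let $\Sigma=\Sigma_{ED,\mathbb A,\mathcal S}$. Then: (i) for all sufficiently large $r>0$, $r\notin\Sigma$ and $S_r(n)=\mathbb R^d$ for all $n\in\mathbb Z^+$; (ii) for all sufficiently small $r>0$, $r\notin\Sigma$ and $S_r(n)=\{0\}$ for all $n\in\mathbb Z^+$.
   Context: $\mathbb Z^+=\{0,1,\dots\}$. $\mathcal A(m,n)=A_{m-1}\cdots A_n$ ($m>n$), $\mathrm{Id}$ ($m=n$), $A_m^{-1}\cdots A_{n-1}^{-1}$ ($m<n$). For $r>0$, $n\in\mathbb Z^+$: $S_r(n)=\{v\in\mathbb R^d:\ \sup_{m\ge n}r^{-(m-n)}\|\mathcal A(m,n)v\|_m<+\infty\}$. A sequence $(C_n)_{n\in\mathbb Z^+}$ with cocycle $\mathcal C$ admits a strong exponential dichotomy w.r.t. $\mathcal S$ if there exist $K>0$, $a\ge\lambda>0$ and projections $P_n$ (possibly $\mathrm{Id}$ or $0$) with $C_nP_n=P_{n+1}C_n$ such that for $m\ge n$, $x$, $Q_m=\mathrm{Id}-P_m$: $\|\mathcal C(m,n)P_nx\|_m\le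 Ke^{-\lambda(m-n)}\|x\|_n$, $\|\mathcal C(n,m)Q_mx\|_n\le Ke^{-\lambda(m-n)}\|x\|_m$, $\|\mathcal C(m,n)x\|_m\le Ke^{a(m-n)}\|x\|_n$, $\|\mathcal C(n,m)x\|_n\le Ke^{a(m-n)}\|x\|_m$. $\Sigma_{ED,\mathbb A,\mathcal S}$: set of $\tau>0$ such that $(\tau^{-1}A_n)_{n\in\mathbb Z^+}$ does not admit a strong exponential dichotomy w.r.t. $\mathcal S$. *)

theory Defs
  imports "HOL-Analysis.Analysis"
begin

type_synonym 'd mat = "real ^ 'd ^ 'd"

primrec fwd :: "(nat \<Rightarrow> 'd::finite mat) \<Rightarrow> nat \<Rightarrow> nat \<Rightarrow> 'd mat" where
  "fwd A n 0 = mat 1"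
| "fwd A n (Suc k) = A (n + k) ** fwd A n k"

primrec bwd :: "(nat \<Rightarrow> 'd::finite mat) \<Rightarrow> nat \<Rightarrow> nat \<Rightarrow> 'd mat" where
  "bwd A n 0 = mat 1"
| "bwd A n (Suc k) = bwd A n k ** matrix_inv (A (n + k))"

definition cocycle :: "(nat \<Rightarrow> 'd::finite mat) \<Rightarrow> nat \<Rightarrow> nat \<Rightarrow> 'd mat" where
  "cocycle A m n = (if n \<le> m then fwd A n (m - n) else bwd A m (n - m))"

definition is_norm :: "(real ^ 'd::finite \<Rightarrow> real) \<Rightarrow> bool" where
  "is_norm N \<longleftrightarrow> (\<forall>x. N x \<ge> 0) \<and> (\<forall>x. N x = 0 \<longleftrightarrow> x = 0)
     \<and> (\<forall>c x. N (c *\<^sub>R x) = \<bar>c\<bar> * N x) \<and> (\<forall>x y. N (x + y) \<le> N x + N y)"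

definition S_r :: "(nat \<Rightarrow> 'd::finite mat) \<Rightarrow> (nat \<Rightarrow> real ^ 'd \<Rightarrow> real) \<Rightarrow> real \<Rightarrow> nat \<Rightarrow> (real ^ 'd) set" where
  "S_r A N r n = {v. \<exists>B. \<forall>m\<ge>n. (inverse r) ^ (m - n) * N m (cocycle A m n *v v) \<le> B}"

definition strong_ED :: "(nat \<Rightarrow> 'd::finite mat) \<Rightarrow> (nat \<Rightarrow> real ^ 'd \<Rightarrow> real) \<Rightarrow> bool" where
  "strong_ED C N \<longleftrightarrow> (\<exists>K a lam P. K > 0 \<and> lam > 0 \<and> a \<ge> lam \<and>
     (\<forall>n. P n ** P n = P n) \<and> (\<forall>n. C n ** P n = P (Suc n) ** C n) \<and>
     (\<forall>m n x. n \<le> m \<longrightarrow>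
        N m (cocycle C m n *v (P n *v x)) \<le> K * exp (- lam * real (m - n)) * N n x \<and>
        N n (cocycle C n m *v ((mat 1 - P m) *v x)) \<le> K * exp (- lam * real (m - n)) * N m x \<and>
        N m (cocycle C m n *v x) \<le> K * exp (a * real (m - n)) * N n x \<and>
        N n (cocycle C n m *v x) \<le> K * exp (a * real (m - n)) * N m x))"

definition Sigma_ED :: "(nat \<Rightarrow> 'd::finite mat) \<Rightarrow> (nat \<Rightarrow> real ^ 'd \<Rightarrow> real) \<Rightarrow> real set" where
  "Sigma_ED A N = {\<tau>. \<tau> > 0 \<and> \<not> strong_ED (\<lambda>n. inverse \<tau> *\<^sub>R A n) N}"

end

theory Submission imports Defs begin

text \<open>Dividing the cocycle by \<tau> multiplies its forward growth over k steps by \<tau> to the power -k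
  and its backward growth by \<tau> to the power k. Hence, for \<tau> > exp a, the scaled forward cocycle
  contracts uniformly, giving a strong exponential dichotomy with P = Id, and every forward orbit
  is bounded. For \<tau> < exp (-a) the scaled backward cocycle contracts, giving a dichotomy with
  P = 0; a vector with bounded scaled forward orbit is then the backward image of bounded vectors
  arbitrarily far ahead, so it must vanish.\<close>

lemma matrix_inv_left:
  fixes M :: "'a::semiring_1^'n^'n"
  assumes "invertible M" shows "matrix_inv M ** M = mat 1"
  using someI_ex[OF assms[unfolded invertible_def]] unfolding matrix_inv_def by blast

lemma matrix_inv_right:
  fixes M :: "'a::semiring_1^'n^'n"
  assumes "invertible M" shows "M ** matrix_inv M = mat 1"
  using someI_ex[OF assms[unfolded invertible_def]] unfolding matrix_inv_def by blast

lemma matrix_inv_unique: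
  fixes M :: "'a::semiring_1^'n^'n"
  assumes "invertible M" and "M ** M' = mat 1" shows "matrix_inv M = M'"
proof -
  have "matrix_inv M = matrix_inv M ** (M ** M')" using assms(2) by simp
  also have "\<dots> = M'" by (simp add: matrix_mul_assoc matrix_inv_left[OF assms(1)])
  finally show ?thesis .
qed

lemma matrix_inv_scaleR:
  fixes M :: "real^'n^'n"
  assumes "invertible M" and "c \<noteq> 0"
  shows "matrix_inv (c *\<^sub>R M) = inverse c *\<^sub>R matrix_inv M"
  using assms by (intro matrix_inv_unique scalar_invertible)
    (simp_all add: matrix_scalar_ac matrix_inv_right flip: scalar_matrix_assoc)

lemma bwd_mult_fwd:
  assumes "\<And>n. invertible (A n)" shows "bwd A n k ** fwd A n k = mat 1"
proof (induction k)
  case 0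
  then show ?case by simp
next
  case (Suc k)
  have "bwd A n (Suc k) ** fwd A n (Suc k)
      = bwd A n k ** (matrix_inv (A (n + k)) ** A (n + k)) ** fwd A n k"
    by (simp add: matrix_mul_assoc)
  then show ?case using Suc matrix_inv_left[OF assms] by simp
qed

lemma cocycle_backward_mult_forward:
  assumes "\<And>n. invertible (A n)" and "n \<le> m"
  shows "cocycle A n m ** cocycle A m n = mat 1"
  using assms bwd_mult_fwd[OF assms(1)] by (cases "m = n") (auto simp: cocycle_def)

lemma fwd_scaleR: "fwd (\<lambda>n. c *\<^sub>R A n) n k = c ^ k *\<^sub>R fwd A n k"
  by (induction k) (simp_all add: matrix_scalar_ac flip: scalar_matrix_assoc)

lemma bwd_scaleR:
  assumes "\<And>n. invertible (A n)" and "c \<noteq> 0"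
  shows "bwd (\<lambda>n. c *\<^sub>R A n) n k = inverse c ^ k *\<^sub>R bwd A n k"
  by (induction k)
    (simp_all add: matrix_inv_scaleR assms matrix_scalar_ac mult.commute flip: scalar_matrix_assoc)

lemma cocycle_scaleR_forward:
  "n \<le> m \<Longrightarrow> cocycle (\<lambda>n. c *\<^sub>R A n) m n = c ^ (m - n) *\<^sub>R cocycle A m n"
  by (simp add: cocycle_def fwd_scaleR)

lemma cocycle_scaleR_backward:
  assumes "\<And>n. invertible (A n)" and "c \<noteq> 0" and "n \<le> m"
  shows "cocycle (\<lambda>n. c *\<^sub>R A n) n m = inverse c ^ (m - n) *\<^sub>R cocycle A n m"
  using assms by (auto simp: cocycle_def bwd_scaleR)

lemma is_norm_zero: "is_norm N \<Longrightarrow> N 0 = 0"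
  unfolding is_norm_def by blast

lemma is_norm_nonneg: "is_norm N \<Longrightarrow> N x \<ge> 0"
  unfolding is_norm_def by blast

lemma is_norm_pos: "is_norm N \<Longrightarrow> x \<noteq> 0 \<Longrightarrow> N x > 0"
  unfolding is_norm_def by (metis order_le_less)

lemma is_norm_scaleR: "is_norm N \<Longrightarrow> N (c *\<^sub>R x) = \<bar>c\<bar> * N x"
  unfolding is_norm_def by blast

lemma norm_cocycle_scaleR_forward:
  assumes "is_norm N'" and "n \<le> m"
  shows "N' (cocycle (\<lambda>n. c *\<^sub>R A n) m n *v x) = \<bar>c\<bar> ^ (m - n) * N' (cocycle A m n *v x)"
  using assms
  by (simp add: cocycle_scaleR_forward is_norm_scaleR power_abs flip: scaleR_matrix_vector_assoc)

lemma norm_cocycle_scaleR_backward: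
  assumes "\<And>n. invertible (A n)" and "c \<noteq> 0" and "is_norm N'" and "n \<le> m"
  shows "N' (cocycle (\<lambda>n. c *\<^sub>R A n) n m *v x)
    = \<bar>inverse c\<bar> ^ (m - n) * N' (cocycle A n m *v x)"
  using assms
  by (simp add: cocycle_scaleR_backward is_norm_scaleR power_abs flip: scaleR_matrix_vector_assoc)

definition bounded_orbit :: "(nat \<Rightarrow> 'd::finite mat) \<Rightarrow> (nat \<Rightarrow> real ^ 'd \<Rightarrow> real) \<Rightarrow> nat \<Rightarrow> real ^ 'd \<Rightarrow> bool"
  where "bounded_orbit C N n v \<longleftrightarrow> (\<exists>B. \<forall>m\<ge>n. N m (cocycle C m n *v v) \<le> B)"

lemma S_r_eq_bounded_orbit:
  assumes "r > 0" and "\<And>m. is_norm (N m)"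
  shows "S_r A N r n = {v. bounded_orbit (\<lambda>n. inverse r *\<^sub>R A n) N n v}"
  using assms by (simp add: S_r_def bounded_orbit_def norm_cocycle_scaleR_forward)

lemma exponential_bound_mono:
  fixes K s t :: real
  assumes "y \<le> K * exp (s * real k) * z" and "s \<le> t" and "K \<ge> 0" and "z \<ge> 0"
  shows "y \<le> K * exp (t * real k) * z"
proof -
  have "exp (s * real k) \<le> exp (t * real k)"
    using assms(2) by (simp add: mult_right_mono)
  then show ?thesis
    using assms(1,3,4) by (meson mult_left_mono mult_right_mono order_trans)
qed

lemma strong_ED_forward_contraction:
  assumes norms: "\<And>n. is_norm (N n)" and "K > 0" and "lam > 0"
    and fwd: "\<And>m n x. n \<le> m \<Longrightarrow> N m (cocycle C m n *v x) \<le> K * exp (- lam * real (m - n)) * N n x"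
    and bwd: "\<And>m n x. n \<le> m \<Longrightarrow> N n (cocycle C n m *v x) \<le> K * exp (b * real (m - n)) * N m x"
  shows "strong_ED C N"
  unfolding strong_ED_def
proof (rule exI[of _ K], rule exI[of _ "max lam b"], rule exI[of _ lam],
    rule exI[of _ "\<lambda>_. mat 1"], intro conjI allI impI)
  fix m n :: nat and x assume nm: "n \<le> m"
  show "N m (cocycle C m n *v x) \<le> K * exp (max lam b * real (m - n)) * N n x"
    by (rule exponential_bound_mono[OF fwd[OF nm]]) (use assms(2,3) is_norm_nonneg[OF norms] in auto)
  show "N n (cocycle C n m *v x) \<le> K * exp (max lam b * real (m - n)) * N m x"
    by (rule exponential_bound_mono[OF bwd[OF nm]]) (use assms(2) is_norm_nonneg[OF norms] in auto)
  show "N n (cocycle C n m *v ((mat 1 - mat 1) *v x)) \<le> K * exp (- lam * real (m - n)) * N m x"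
    using is_norm_zero[OF norms] is_norm_nonneg[OF norms] assms(2) by simp
qed (use assms fwd in auto)

lemma strong_ED_backward_contraction:
  assumes norms: "\<And>n. is_norm (N n)" and "K > 0" and "lam > 0"
    and fwd: "\<And>m n x. n \<le> m \<Longrightarrow> N m (cocycle C m n *v x) \<le> K * exp (b * real (m - n)) * N n x"
    and bwd: "\<And>m n x. n \<le> m \<Longrightarrow> N n (cocycle C n m *v x) \<le> K * exp (- lam * real (m - n)) * N m x"
  shows "strong_ED C N"
  unfolding strong_ED_def
proof (rule exI[of _ K], rule exI[of _ "max lam b"], rule exI[of _ lam],
    rule exI[of _ "\<lambda>_. 0"], intro conjI allI impI)
  fix m n :: nat and x assume nm: "n \<le> m"
  show "N m (cocycle C m n *v x) \<le> K * exp (max lam b * real (m - n)) * N n x"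
    by (rule exponential_bound_mono[OF fwd[OF nm]]) (use assms(2) is_norm_nonneg[OF norms] in auto)
  show "N n (cocycle C n m *v x) \<le> K * exp (max lam b * real (m - n)) * N m x"
    by (rule exponential_bound_mono[OF bwd[OF nm]]) (use assms(2,3) is_norm_nonneg[OF norms] in auto)
  show "N m (cocycle C m n *v (0 *v x)) \<le> K * exp (- lam * real (m - n)) * N n x"
    using is_norm_zero[OF norms] is_norm_nonneg[OF norms] assms(2) by simp
qed (use assms bwd in auto)

lemma bounded_orbit_forward_contraction:
  assumes norms: "\<And>n. is_norm (N n)" and "K \<ge> 0" and "lam \<ge> 0"
    and fwd: "\<And>m n x. n \<le> m \<Longrightarrow> N m (cocycle C m n *v x) \<le> K * exp (- lam * real (m - n)) * N n x"
  shows "bounded_orbit C N n v"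
  unfolding bounded_orbit_def
proof (intro exI[of _ "K * N n v"] allI impI)
  fix m assume "n \<le> m"
  then have "N m (cocycle C m n *v v) \<le> K * exp (0 * real (m - n)) * N n v"
    by (rule exponential_bound_mono[OF fwd]) (use assms is_norm_nonneg[OF norms] in auto)
  then show "N m (cocycle C m n *v v) \<le> K * N n v"
    by simp
qed

lemma bounded_orbit_backward_contraction_eq_zero:
  assumes inv: "\<And>n. invertible (C n)" and norms: "\<And>n. is_norm (N n)" and "K \<ge> 0" and "lam > 0"
    and bwd: "\<And>m n x. n \<le> m \<Longrightarrow> N n (cocycle C n m *v x) \<le> K * exp (- lam * real (m - n)) * N m x"
    and orbit: "bounded_orbit C N n v"
  shows "v = 0"
proof -
  obtain B where B: "\<And>m. n \<le> m \<Longrightarrow> N m (cocycle C m n *v v) \<le> B"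
    using orbit unfolding bounded_orbit_def by blast
  have "N n v \<le> K * B * exp (- lam) ^ k" for k
  proof -
    have "N n v = N n (cocycle C n (n + k) *v (cocycle C (n + k) n *v v))"
      using cocycle_backward_mult_forward[OF inv, of n "n + k"]
      by (simp add: matrix_vector_mul_assoc)
    also have "\<dots> \<le> K * exp (- lam * real k) * N (n + k) (cocycle C (n + k) n *v v)"
      using bwd[of n "n + k"] by simp
    also have "\<dots> \<le> K * exp (- lam * real k) * B"
      using B[of "n + k"] \<open>K \<ge> 0\<close> by (simp add: mult_left_mono)
    finally show ?thesis
      by (simp add: exp_of_nat_mult[symmetric] mult.commute mult.left_commute)
  qed
  moreover have "(\<lambda>k. K * B * exp (- lam) ^ k) \<longlonglongrightarrow> 0"
    using \<open>lam > 0\<close> by (intro tendsto_mult_right_zero LIMSEQ_power_zero) simp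
  ultimately have "N n v \<le> 0"
    by (intro LIMSEQ_le_const[of _ 0]) auto
  then show "v = 0"
    using is_norm_pos[OF norms] by (meson not_less)
qed

locale bounded_growth_cocycle =
  fixes A :: "nat \<Rightarrow> real ^ 'd::finite ^ 'd" and N :: "nat \<Rightarrow> real ^ 'd \<Rightarrow> real" and K a :: real
  assumes invertible: "\<And>n. invertible (A n)"
    and norms: "\<And>n. is_norm (N n)"
    and K_pos: "K > 0"
    and growth: "\<And>m n x. n \<le> m \<Longrightarrow> N m (cocycle A m n *v x) \<le> K * exp (a * real (m - n)) * N n x"
    and growth': "\<And>m n x. n \<le> m \<Longrightarrow> N n (cocycle A n m *v x) \<le> K * exp (a * real (m - n)) * N m x"
begin

lemma scaled_growth:
  assumes "\<tau> > 0" and "n \<le> m"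
  shows "N m (cocycle (\<lambda>n. inverse \<tau> *\<^sub>R A n) m n *v x) \<le> K * exp ((a - ln \<tau>) * real (m - n)) * N n x"
proof -
  have "N m (cocycle (\<lambda>n. inverse \<tau> *\<^sub>R A n) m n *v x) = exp (- ln \<tau>) ^ (m - n) * N m (cocycle A m n *v x)"
    using assms norm_cocycle_scaleR_forward[OF norms] by (simp add: exp_minus)
  also have "\<dots> \<le> exp (- ln \<tau>) ^ (m - n) * (K * exp (a * real (m - n)) * N n x)"
    using growth[OF assms(2)] by (simp add: mult_left_mono)
  also have "\<dots> = K * exp ((a - ln \<tau>) * real (m - n)) * N n x"
    by (simp add: exp_of_nat_mult[symmetric] exp_add[symmetric] algebra_simps)
  finally show ?thesis .
qed

lemma scaled_growth':
  assumes "\<tau> > 0" and "n \<le> m"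
  shows "N n (cocycle (\<lambda>n. inverse \<tau> *\<^sub>R A n) n m *v x) \<le> K * exp ((a + ln \<tau>) * real (m - n)) * N m x"
proof -
  have "N n (cocycle (\<lambda>n. inverse \<tau> *\<^sub>R A n) n m *v x) = exp (ln \<tau>) ^ (m - n) * N n (cocycle A n m *v x)"
    using assms norm_cocycle_scaleR_backward[OF invertible _ norms] by simp
  also have "\<dots> \<le> exp (ln \<tau>) ^ (m - n) * (K * exp (a * real (m - n)) * N m x)"
    using growth'[OF assms(2)] by (simp add: mult_left_mono)
  also have "\<dots> = K * exp ((a + ln \<tau>) * real (m - n)) * N m x"
    by (simp add: exp_of_nat_mult[symmetric] exp_add[symmetric] algebra_simps)
  finally show ?thesis .
qed

lemma large_scale_dichotomy:
  assumes "exp a < r"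
  shows "r \<notin> Sigma_ED A N \<and> (\<forall>n. S_r A N r n = UNIV)"
proof -
  have "r > 0" using assms exp_gt_zero less_trans by blast
  have "ln r - a > 0" using assms \<open>r > 0\<close> exp_less_cancel_iff[of a "ln r"] by simp
  have fwd: "N m (cocycle (\<lambda>n. inverse r *\<^sub>R A n) m n *v x)
      \<le> K * exp (- (ln r - a) * real (m - n)) * N n x" if "n \<le> m" for m n x
    using scaled_growth[OF \<open>r > 0\<close> that] by simp
  have "strong_ED (\<lambda>n. inverse r *\<^sub>R A n) N"
    using norms K_pos \<open>ln r - a > 0\<close> fwd scaled_growth'[OF \<open>r > 0\<close>]
    by (rule strong_ED_forward_contraction)
  moreover have "bounded_orbit (\<lambda>n. inverse r *\<^sub>R A n) N n v" for n v
    using norms _ _ fwd by (rule bounded_orbit_forward_contraction) (use K_pos \<open>ln r - a > 0\<close> in auto)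
  ultimately show ?thesis
    using \<open>r > 0\<close> by (simp add: Sigma_ED_def S_r_eq_bounded_orbit norms)
qed

lemma small_scale_dichotomy:
  assumes "0 < r" and "r < exp (- a)"
  shows "r \<notin> Sigma_ED A N \<and> (\<forall>n. S_r A N r n = {0})"
proof -
  have "- ln r - a > 0" using assms exp_less_cancel_iff[of "ln r" "- a"] by simp
  have bwd: "N n (cocycle (\<lambda>n. inverse r *\<^sub>R A n) n m *v x)
      \<le> K * exp (- (- ln r - a) * real (m - n)) * N m x" if "n \<le> m" for m n x
    using scaled_growth'[OF \<open>r > 0\<close> that] by (simp add: add.commute)
  have "strong_ED (\<lambda>n. inverse r *\<^sub>R A n) N"
    using norms K_pos \<open>- ln r - a > 0\<close> scaled_growth[OF \<open>r > 0\<close>] bwd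
    by (rule strong_ED_backward_contraction)
  moreover have "v = 0" if "bounded_orbit (\<lambda>n. inverse r *\<^sub>R A n) N n v" for n v
    using _ norms _ \<open>- ln r - a > 0\<close> bwd that
    by (rule bounded_orbit_backward_contraction_eq_zero)
      (use \<open>r > 0\<close> K_pos in \<open>auto intro: scalar_invertible invertible\<close>)
  moreover have "bounded_orbit (\<lambda>n. inverse r *\<^sub>R A n) N n 0" for n
    using is_norm_zero[OF norms] by (auto simp: bounded_orbit_def)
  ultimately show ?thesis
    using \<open>r > 0\<close> by (auto simp: Sigma_ED_def S_r_eq_bounded_orbit norms)
qed

end

theorem lemma7p4:
  fixes A :: "nat \<Rightarrow> real ^ 'd ^ 'd" and N :: "nat \<Rightarrow> real ^ 'd \<Rightarrow> real"
  assumes inv: "\<And>n. invertible (A n)"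
    and norms: "\<And>n. is_norm (N n)"
    and K: "K > 0" and a: "a > 0"
    and growth: "\<And>m n x. n \<le> m \<Longrightarrow> N m (cocycle A m n *v x) \<le> K * exp (a * real (m - n)) * N n x"
    and growth': "\<And>m n x. n \<le> m \<Longrightarrow> N n (cocycle A n m *v x) \<le> K * exp (a * real (m - n)) * N m x"
  shows "(\<exists>R>0. \<forall>r>R. r \<notin> Sigma_ED A N \<and> (\<forall>n. S_r A N r n = UNIV))
       \<and> (\<exists>\<epsilon>>0. \<forall>r. 0 < r \<and> r < \<epsilon> \<longrightarrow> r \<notin> Sigma_ED A N \<and> (\<forall>n. S_r A N r n = {0}))"
proof -
  interpret bounded_growth_cocycle A N K a
    using inv norms K growth growth' by unfold_locales
  show ?thesis
    using large_scale_dichotomy small_scale_dichotomy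
    by (intro conjI exI[of _ "exp a"] exI[of _ "exp (- a)"]) auto
qed

end
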